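(* Let $q$ be a prime power and $n,k,\gamma$ positive integers with $n\ge2k+\gamma$. Then $$B_q(n,k,k+\gamma;3)\ge q^{\left\lfloor\frac{n-2k+1}{k+1}\right\rfloor\left\lfloor\frac{k}{\gamma}\right\rfloor}.$$
   Context: For a prime power $q$, $\mathcal{G}_q(n,k)$ denotes the set of all $k$-dimensional subspaces of $\mathbb{F}_q^n$. An $\alpha$-$(n,k,\delta)_q^c$ covering Grassmannian code is a subset $\mathcal{C}\subseteq\mathcal{G}_q(n,k)$ (no repeated codewords) such that every set of $\alpha$ distinct codewords of $\mathcal{C}$ spans a subspace of $\mathbb{F}_q^n$ of dimension at least $k+\delta$. $B_q(n,k,\delta;\alpha)$ denotes the maximum size of an $\alpha$-$(n,k,\delta)_q^c$ code. *)

theory Defs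
  imports Main "HOL.Vector_Spaces" "HOL-Library.Function_Algebras"
begin

text \<open>Vectors of F^n are modelled as functions nat => F vanishing outside {0..<n}.
  The field F_q is a finite field type 'a with q = CARD('a).\<close>

definition vscale :: "'a::field \<Rightarrow> (nat \<Rightarrow> 'a) \<Rightarrow> (nat \<Rightarrow> 'a)" where
  "vscale c v = (\<lambda>i. c * v i)"

definition ambient :: "nat \<Rightarrow> (nat \<Rightarrow> 'a::field) set" where
  "ambient n = {v. \<forall>i\<ge>n. v i = 0}"

definition vdim :: "(nat \<Rightarrow> 'a::field) set \<Rightarrow> nat" where
  "vdim S = vector_space.dim vscale S"

definition vspan :: "(nat \<Rightarrow> 'a::field) set \<Rightarrow> (nat \<Rightarrow> 'a) set" where
  "vspan S = module.span vscale S"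

definition grassmannian :: "nat \<Rightarrow> nat \<Rightarrow> (nat \<Rightarrow> 'a::field) set set" where
  "grassmannian n k = {S. module.subspace vscale S \<and> S \<subseteq> ambient n \<and> vdim S = k}"

definition covering_code :: "nat \<Rightarrow> nat \<Rightarrow> nat \<Rightarrow> nat \<Rightarrow> (nat \<Rightarrow> 'a::field) set set \<Rightarrow> bool" where
  "covering_code \<alpha> n k \<delta> C \<longleftrightarrow> C \<subseteq> grassmannian n k \<and>
     (\<forall>A\<subseteq>C. card A = \<alpha> \<longrightarrow> vdim (vspan (\<Union>A)) \<ge> k + \<delta>)"

definition B :: "'a::{finite,field} itself \<Rightarrow> nat \<Rightarrow> nat \<Rightarrow> nat \<Rightarrow> nat \<Rightarrow> nat" where
  "B _ n k \<delta> \<alpha> = Sup {card C | C. covering_code \<alpha> n k \<delta> (C :: (nat \<Rightarrow> 'a) set set)}"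

end

theory Submission
  imports Defs
begin

text \<open>Messages are words of length p = t m over the field, where m = (n - 2k + 1) div (k + 1) and
  t = k div \<gamma>; the codeword of a message is spanned by k rows consisting of an identity block, a
  staircase listing the message in every row, and a block of squares of its coordinates.
  For three distinct messages x, y, z the span of their codewords contains the rows for x and
  every combination a (row_i(y) - row_i(x)) + c (row_i(z) - row_i(x)); we count leading positions
  (pivots) of such vectors. The identity block gives k pivots, and a combination of y - x and
  z - x with first nonzero coordinate j gives k more through the staircase. If y - x and z - x are
  not proportional, two combinations have different first nonzero coordinates, giving \<gamma> further
  pivots. If z - x = c (y - x), then c \<notin> {0, 1}; the staircase then cancels in
  c (y - x) - (z - x), but the square block retains (c - c^2) (y - x)^2 \<noteq> 0 and yields the
  \<gamma> further pivots.\<close>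

interpretation V: vector_space "vscale :: 'a::field \<Rightarrow> (nat \<Rightarrow> 'a) \<Rightarrow> (nat \<Rightarrow> 'a)"
  by unfold_locales (auto simp: vscale_def fun_eq_iff algebra_simps)

lemma vscale_apply [simp]: "vscale c v i = c * v i"
  by (simp add: vscale_def)

lemma sum_vscale_apply:
  fixes c :: "(nat \<Rightarrow> 'a::field) \<Rightarrow> 'a"
  assumes "finite T"
  shows "(\<Sum>v\<in>T. vscale (c v) v) i = (\<Sum>v\<in>T. c v * v i)"
  using assms by (induction T rule: finite_induct) auto

definition pivot_at :: "(nat \<Rightarrow> 'a::zero) \<Rightarrow> nat \<Rightarrow> bool" where
  "pivot_at v P \<longleftrightarrow> v P \<noteq> 0 \<and> (\<forall>i<P. v i = 0)"

definition pivot_positions :: "(nat \<Rightarrow> 'a::zero) set \<Rightarrow> nat set" where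
  "pivot_positions S = {P. \<exists>v\<in>S. pivot_at v P}"

lemma pivot_at_Least: "pivot_at v P \<Longrightarrow> (LEAST i. v i \<noteq> 0) = P"
  unfolding pivot_at_def by (rule Least_equality) (auto simp: not_less[symmetric])

lemma ex_pivot_at:
  assumes "\<exists>j<p. f j \<noteq> 0"
  obtains j where "j < p" "pivot_at f j"
proof -
  obtain j where "j < p \<and> f j \<noteq> 0" "\<forall>i<j. \<not> (i < p \<and> f i \<noteq> 0)"
    using assms exists_least_iff[of "\<lambda>j. j < p \<and> f j \<noteq> 0"] by blast
  then show ?thesis using that by (auto simp: pivot_at_def)
qed

lemma pivot_at_shift: "pivot_at f (s + l) \<Longrightarrow> pivot_at (\<lambda>i. f (s + i)) l"
  by (simp add: pivot_at_def)

text \<open>Evaluating a vanishing combination at the smallest pivot among the vectors with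
  nonzero coefficient leaves a single nonzero term.\<close>
lemma independent_if_inj_pivot:
  fixes S :: "(nat \<Rightarrow> 'a::field) set" and pv :: "(nat \<Rightarrow> 'a) \<Rightarrow> nat"
  assumes piv: "\<And>v. v \<in> S \<Longrightarrow> pivot_at v (pv v)" and inj: "inj_on pv S"
  shows "V.independent S"
proof
  assume "V.dependent S"
  then obtain T c v where T: "finite T" "T \<subseteq> S" "(\<Sum>v\<in>T. vscale (c v) v) = 0" "v \<in> T" "c v \<noteq> 0"
    unfolding V.dependent_explicit by blast
  define T' where "T' = {w \<in> T. c w \<noteq> 0}"
  obtain w0 where w0: "w0 \<in> T'" "\<forall>w\<in>T'. pv w0 \<le> pv w"
    using ex_has_least_nat[of "\<lambda>w. w \<in> T'" v pv] T(4,5) by (auto simp: T'_def)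
  have "(\<Sum>v\<in>T. vscale (c v) v) (pv w0) = (\<Sum>w\<in>T. c w * w (pv w0))"
    by (rule sum_vscale_apply[OF T(1)])
  also have "\<dots> = c w0 * w0 (pv w0)"
  proof (rule sum.remove[OF T(1), THEN trans])
    show "w0 \<in> T" using w0 by (simp add: T'_def)
    have "c w * w (pv w0) = 0" if w: "w \<in> T - {w0}" for w
    proof (cases "c w = 0")
      case False
      then have "pv w0 \<le> pv w" using w w0 by (simp add: T'_def)
      moreover have "pv w \<noteq> pv w0"
        using inj_onD[OF inj] w w0(1) T(2) by (auto simp: T'_def)
      ultimately have "pv w0 < pv w" by simp
      then show ?thesis using piv[of w] w T(2) by (auto simp: pivot_at_def)
    qed simp
    then show "c w0 * w0 (pv w0) + (\<Sum>w\<in>T - {w0}. c w * w (pv w0)) = c w0 * w0 (pv w0)"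
      by (simp add: sum.neutral)
  qed
  also have "\<dots> \<noteq> 0" using w0 piv[of w0] T(2) by (auto simp: T'_def pivot_at_def)
  finally show False using T(3) by simp
qed

lemma independent_pivot_family:
  fixes w :: "nat \<Rightarrow> nat \<Rightarrow> 'a::field"
  assumes "\<And>P. P \<in> Pos \<Longrightarrow> pivot_at (w P) P"
  shows "V.independent (w ` Pos)" and "inj_on w Pos"
proof -
  show inj: "inj_on w Pos"
    by (rule inj_onI) (metis assms pivot_at_Least)
  show "V.independent (w ` Pos)"
  proof (rule independent_if_inj_pivot[where pv = "\<lambda>v. LEAST i. v i \<noteq> 0"])
    show "pivot_at v (LEAST i. v i \<noteq> 0)" if "v \<in> w ` Pos" for v
      using that assms pivot_at_Least by fastforce
    show "inj_on (\<lambda>v. LEAST i. v i \<noteq> 0) (w ` Pos)"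
      by (rule inj_onI) (auto simp: pivot_at_Least[OF assms])
  qed
qed

lemma card_le_dim_if_pivot_positions:
  fixes G :: "(nat \<Rightarrow> 'a::field) set"
  assumes "finite G" and "Pos \<subseteq> pivot_positions (V.span G)"
  shows "card Pos \<le> V.dim G"
proof -
  have "\<forall>P\<in>Pos. \<exists>v. v \<in> V.span G \<and> pivot_at v P"
    using assms(2) by (auto simp: pivot_positions_def)
  then obtain w where w: "\<forall>P\<in>Pos. w P \<in> V.span G \<and> pivot_at (w P) P"
    by (auto dest: bchoice)
  have indep: "V.independent (w ` Pos)" and inj: "inj_on w Pos"
    using independent_pivot_family[of Pos w] w by auto
  obtain B where B: "w ` Pos \<subseteq> B" "B \<subseteq> V.span G" "V.independent B" "V.span G \<subseteq> V.span B"
    using V.maximal_independent_subset_extend[of "w ` Pos" "V.span G"] w indep by blast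
  have "finite B" using V.independent_span_bound[OF assms(1) B(3,2)] by simp
  have "card Pos = card (w ` Pos)" using card_image[OF inj] by simp
  also have "\<dots> \<le> card B" using B(1) \<open>finite B\<close> by (rule card_mono[rotated])
  also have "\<dots> = V.dim G"
  proof -
    have "V.span B = V.span G" using V.span_mono[OF B(2)] B(4) by (simp add: V.span_span)
    then show ?thesis using V.dim_eq_card B(3) by metis
  qed
  finally show ?thesis .
qed

lemma two_combinations_with_distinct_pivots:
  fixes d e :: "nat \<Rightarrow> 'a::field"
  assumes d: "\<exists>j<p. d j \<noteq> 0" and not_prop: "\<not> (\<exists>c. \<forall>j<p. e j = c * d j)"
  obtains a1 b1 a2 b2 j1 j2 where "j1 < j2" "j2 < p"
    "pivot_at (\<lambda>j. a1 * d j + b1 * e j) j1" "pivot_at (\<lambda>j. a2 * d j + b2 * e j) j2"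
proof -
  obtain jd where jd: "jd < p" "pivot_at d jd" using ex_pivot_at[OF d] by blast
  have "\<exists>j<p. e j \<noteq> 0" using not_prop by (metis mult_zero_left)
  then obtain je where je: "je < p" "pivot_at e je" by (rule ex_pivot_at)
  consider "jd < je" | "je < jd" | "jd = je" by linarith
  then show ?thesis
  proof cases
    case 1
    then show ?thesis using that[of jd je 1 0 0 1] jd je by simp
  next
    case 2
    then show ?thesis using that[of je jd 0 1 1 0] jd je by simp
  next
    case 3
    define c where "c = e jd / d jd"
    have "\<exists>j<p. - c * d j + 1 * e j \<noteq> 0"
    proof (rule ccontr)
      assume "\<not> (\<exists>j<p. - c * d j + 1 * e j \<noteq> 0)"
      then have "\<forall>j<p. e j = c * d j" by (simp add: algebra_simps)
      then show False using not_prop by blast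
    qed
    then obtain j2 where j2: "j2 < p" "pivot_at (\<lambda>j. - c * d j + 1 * e j) j2"
      by (rule ex_pivot_at)
    have "- c * d j + 1 * e j = 0" if "j \<le> jd" for j
      using jd je 3 that by (cases "j = jd") (auto simp: c_def pivot_at_def)
    then have "jd < j2" using j2(2) by (meson not_le pivot_at_def)
    then show ?thesis using that[of jd j2 1 0 "-c" 1] jd j2 by simp
  qed
qed

lemma card_three_intervals:
  assumes "k \<le> (a::nat)" "a + k \<le> c"
  shows "card ({..<k} \<union> {a..<a+k} \<union> {c..<c+g}) = k + k + g"
proof -
  have "card ({..<k} \<union> {a..<a+k}) = k + k"
    using assms by (subst card_Un_disjoint) auto
  then show ?thesis
    using assms by (subst card_Un_disjoint) auto
qed

lemma span_unit_rows_eq_sum: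
  fixes u :: "nat \<Rightarrow> nat \<Rightarrow> 'a::field"
  assumes unit: "\<And>i l. i < k \<Longrightarrow> l < k \<Longrightarrow> u i l = (if l = i then 1 else 0)"
    and v: "v \<in> vspan (u ` {..<k})"
  shows "v = (\<Sum>i<k. vscale (v i) (u i))"
  using v unfolding vspan_def
proof (induction rule: V.span_induct_alt)
  case base
  show ?case by (simp add: vscale_def fun_eq_iff)
next
  case (step a w v)
  then obtain l where l: "l < k" "w = u l" by auto
  have "vscale a w = (\<Sum>i<k. if i = l then vscale a (u i) else 0)"
    using l by simp
  also have "\<dots> = (\<Sum>i<k. vscale (if i = l then a else 0) (u i))"
    by (rule sum.cong) (auto simp: vscale_def fun_eq_iff)
  finally have "vscale a w + v
      = (\<Sum>i<k. vscale (if i = l then a else 0) (u i)) + (\<Sum>i<k. vscale (v i) (u i))"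
    using step.IH by (rule arg_cong2[where f = "(+)"])
  also have "\<dots> = (\<Sum>i<k. vscale ((vscale a w + v) i) (u i))"
    using l unit by (simp add: V.scale_left_distrib sum.distrib if_distrib[of "\<lambda>c. a * c"] cong: if_cong)
  finally show ?case .
qed

locale staircase_code =
  fixes n k g m t :: nat
  assumes k_pos: "0 < k" and g_pos: "0 < g" and tg_le_k: "t * g \<le> k"
    and length_bound: "m * (k + 1) + 2 * k \<le> n + 1"
begin

definition "p = t * m"

definition "qstart = 2 * k + m * k - g"

definition lin_at :: "nat \<Rightarrow> nat \<Rightarrow> bool" where
  "lin_at i pos \<longleftrightarrow> k + i \<le> pos \<and> pos < qstart \<and> g dvd (pos - k - i) \<and> (pos - k - i) div g < p"

definition "lin_index i pos = (pos - k - i) div g"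

definition quad_at :: "nat \<Rightarrow> nat \<Rightarrow> bool" where
  "quad_at i pos \<longleftrightarrow> i < t * g \<and> qstart + i mod g \<le> pos \<and> pos - qstart - i mod g < m"

definition "quad_index i pos = (i div g) * m + (pos - qstart - i mod g)"

text \<open>The codeword of a message x is the row space of the k \<times> n matrix [I | L(x) | Q(x)]:
  row i carries x j in column k + i + g j for j < p, and, when i = r g + j' < t g, the squares
  (x (r m + l))^2 for l < m in the columns qstart + j' + l.\<close>
definition gen :: "(nat \<Rightarrow> 'a::field) \<Rightarrow> nat \<Rightarrow> nat \<Rightarrow> 'a" where
  "gen x i pos = (if pos = i then 1 else 0)
     + (if lin_at i pos then x (lin_index i pos) else 0)
     + (if quad_at i pos then x (quad_index i pos) ^ 2 else 0)"

definition codeword :: "(nat \<Rightarrow> 'a::field) \<Rightarrow> (nat \<Rightarrow> 'a) set" where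
  "codeword x = vspan (gen x ` {..<k})"

lemma g_le_k:
  assumes "0 < t"
  shows "g \<le> k"
proof -
  have "g \<le> t * g" using assms by (simp add: Suc_leI)
  then show ?thesis using tg_le_k by (rule order_trans)
qed

lemma staircase_fits: "j < p \<Longrightarrow> g * j + g \<le> m * k"
proof -
  assume "j < p"
  then have "g * j + g \<le> g * p" by (metis Suc_leI add.commute mult_Suc_right mult_le_mono2)
  also have "\<dots> = (t * g) * m" by (simp add: p_def)
  also have "\<dots> \<le> m * k" using tg_le_k by simp
  finally show ?thesis .
qed

lemma lin_at_bounds: "lin_at i pos \<Longrightarrow> k \<le> pos \<and> pos < qstart"
  by (auto simp: lin_at_def)

lemma lin_index_less: "lin_at i pos \<Longrightarrow> lin_index i pos < p"
  by (auto simp: lin_at_def lin_index_def)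

lemma lin_at_staircase:
  assumes "i < k" "j < p"
  shows "lin_at i (k + i + g * j)" and "lin_index i (k + i + g * j) = j"
proof -
  have "k + i + g * j < qstart"
    using staircase_fits[OF assms(2)] assms(1) by (simp add: qstart_def)
  then show "lin_at i (k + i + g * j)" using assms g_pos by (simp add: lin_at_def)
  show "lin_index i (k + i + g * j) = j" using g_pos by (simp add: lin_index_def)
qed

lemma quad_at_ge: "quad_at i pos \<Longrightarrow> qstart \<le> pos"
  by (auto simp: quad_at_def)

lemma quad_index_less:
  assumes "quad_at i pos"
  shows "quad_index i pos < p"
proof -
  have "i div g < t" using assms by (auto simp: quad_at_def less_mult_imp_div_less)
  have "quad_index i pos < (i div g) * m + m"
    using assms by (auto simp: quad_at_def quad_index_def)
  also have "\<dots> = (i div g + 1) * m" by simp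
  also have "\<dots> \<le> t * m" using \<open>i div g < t\<close> by (intro mult_le_mono1) simp
  finally show ?thesis by (simp add: p_def)
qed

lemma lin_at_less_n:
  assumes "lin_at i pos"
  shows "pos < n"
proof -
  have "0 < p" using lin_index_less[OF assms] by linarith
  then have "0 < m" by (simp add: p_def)
  then have "qstart \<le> n" using length_bound g_pos by (simp add: qstart_def distrib_left)
  then show ?thesis using lin_at_bounds[OF assms] by simp
qed

lemma quad_at_less_n:
  assumes "quad_at i pos"
  shows "pos < n"
proof -
  have "0 < t * g" using assms unfolding quad_at_def by linarith
  then have "0 < t" by simp
  have "i mod g < g" using g_pos by simp
  then have "pos < qstart + g + m - 1" using assms unfolding quad_at_def by linarith
  also have "\<dots> \<le> n" using length_bound g_le_k[OF \<open>0 < t\<close>] assms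
    by (auto simp: quad_at_def qstart_def distrib_left)
  finally show ?thesis .
qed

lemma quad_at_ge_k:
  assumes "quad_at i pos"
  shows "k \<le> pos"
proof -
  have "0 < t * g" using assms unfolding quad_at_def by linarith
  then have "0 < t" by simp
  then have "k \<le> qstart" using g_le_k by (simp add: qstart_def)
  then show ?thesis using quad_at_ge[OF assms] by simp
qed

lemma gen_low: "pos < k \<Longrightarrow> gen x i pos = (if pos = i then 1 else 0)"
  using lin_at_bounds quad_at_ge_k by (fastforce simp: gen_def)

lemma gen_in_ambient: "i < k \<Longrightarrow> gen x i \<in> ambient n"
proof -
  assume "i < k"
  moreover have "k \<le> n" using length_bound k_pos by linarith
  ultimately show ?thesis
    using lin_at_less_n quad_at_less_n by (fastforce simp: ambient_def gen_def)
qed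

lemma codeword_in_grassmannian: "codeword x \<in> grassmannian n k"
proof -
  have "V.subspace (ambient n :: (nat \<Rightarrow> 'a) set)"
    by (auto simp: V.subspace_def ambient_def)
  moreover have "gen x ` {..<k} \<subseteq> ambient n" using gen_in_ambient by blast
  ultimately have "codeword x \<subseteq> ambient n"
    unfolding codeword_def vspan_def by (rule V.span_minimal[rotated])
  moreover have "V.independent (gen x ` {..<k})" and "inj_on (gen x) {..<k}"
    by (rule independent_pivot_family; simp add: pivot_at_def gen_low)+
  then have "vdim (codeword x) = k"
    unfolding codeword_def vdim_def vspan_def
    by (metis V.dim_span_eq_card_independent card_image card_lessThan)
  ultimately show ?thesis by (simp add: grassmannian_def codeword_def vspan_def)
qed

lemma codeword_cong:
  assumes "\<forall>j<p. x j = y j"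
  shows "codeword x = codeword y"
proof -
  have "gen x = gen y"
    using assms lin_index_less quad_index_less by (auto simp: gen_def fun_eq_iff)
  then show ?thesis by (simp add: codeword_def)
qed

text \<open>By the identity block, a vector of a codeword is the combination of the generator rows given
  by its first k entries; so the first rows of two equal codewords agree, and the staircase of the
  first row lists the message.\<close>
lemma codeword_inj:
  assumes "codeword x = codeword y"
  shows "\<forall>j<p. x j = y j"
proof (intro allI impI)
  fix j assume j: "j < p"
  have "gen y 0 \<in> codeword x"
    using assms k_pos unfolding codeword_def vspan_def by (auto intro: V.span_base)
  then have "gen y 0 = (\<Sum>i<k. vscale (gen y 0 i) (gen x i))"
    unfolding codeword_def by (rule span_unit_rows_eq_sum[rotated]) (simp add: gen_low)
  also have "\<dots> = (\<Sum>i<k. if i = 0 then gen x i else 0)"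
    by (rule sum.cong) (auto simp: gen_low vscale_def fun_eq_iff)
  also have "\<dots> = gen x 0" using k_pos by simp
  finally have "gen y 0 (k + g * j) = gen x 0 (k + g * j)" by simp
  moreover have "\<not> quad_at 0 (k + g * j)"
    using lin_at_staircase[of 0 j] k_pos j lin_at_bounds quad_at_ge by fastforce
  ultimately show "x j = y j" using lin_at_staircase[of 0 j] k_pos j by (simp add: gen_def)
qed

definition comb :: "(nat \<Rightarrow> 'a::field) \<Rightarrow> (nat \<Rightarrow> 'a) \<Rightarrow> (nat \<Rightarrow> 'a) \<Rightarrow> 'a \<Rightarrow> 'a \<Rightarrow> nat \<Rightarrow> nat \<Rightarrow> 'a" where
  "comb x y z a c i = vscale a (gen y i - gen x i) + vscale c (gen z i - gen x i)"

lemma comb_apply: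
  "comb x y z a c i pos =
     (if lin_at i pos then a * (y (lin_index i pos) - x (lin_index i pos))
        + c * (z (lin_index i pos) - x (lin_index i pos)) else 0)
   + (if quad_at i pos then a * (y (quad_index i pos) ^ 2 - x (quad_index i pos) ^ 2)
        + c * (z (quad_index i pos) ^ 2 - x (quad_index i pos) ^ 2) else 0)"
  by (simp add: comb_def gen_def algebra_simps)

lemma pivot_at_comb_lin:
  assumes i: "i < k" and j0: "j0 < p"
    and piv: "pivot_at (\<lambda>j. a * (y j - x j) + c * (z j - x j)) j0"
  shows "pivot_at (comb x y z a c i) (k + i + g * j0)"
proof -
  note staircase = lin_at_staircase[OF i j0]
  have not_quad: "\<not> quad_at i pos" if "pos \<le> k + i + g * j0" for pos
    using that lin_at_bounds[OF staircase(1)] quad_at_ge by fastforce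
  have "comb x y z a c i pos = 0" if pos: "pos < k + i + g * j0" for pos
  proof (cases "lin_at i pos")
    case True
    then obtain j where j: "pos - k - i = g * j" by (auto simp: lin_at_def)
    then have "lin_index i pos = j" using g_pos by (simp add: lin_index_def)
    moreover have "g * j < g * j0" using j pos True unfolding lin_at_def by linarith
    then have "j < j0" by simp
    ultimately show ?thesis
      using piv not_quad[of pos] pos by (simp add: comb_apply pivot_at_def)
  qed (use not_quad[of pos] pos in \<open>simp add: comb_apply\<close>)
  then show ?thesis
    using piv staircase not_quad by (simp add: comb_apply pivot_at_def)
qed

lemma pivot_at_comb_quad:
  assumes r: "r < t" and j': "j' < g" and l0: "l0 < m"
    and lin_zero: "\<forall>j<p. a * (y j - x j) + c * (z j - x j) = 0"
    and piv: "pivot_at (\<lambda>l. a * (y (r * m + l) ^ 2 - x (r * m + l) ^ 2)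
                          + c * (z (r * m + l) ^ 2 - x (r * m + l) ^ 2)) l0"
  shows "pivot_at (comb x y z a c (r * g + j')) (qstart + j' + l0)"
proof -
  define i where "i = r * g + j'"
  have i_div: "i div g = r" and i_mod: "i mod g = j'" using j' by (simp_all add: i_def)
  have "i < (r + 1) * g" using j' by (simp add: i_def)
  also have "\<dots> \<le> t * g" using r by (intro mult_le_mono1) simp
  finally have "i < t * g" .
  then have quad: "quad_at i (qstart + j' + l0)" "quad_index i (qstart + j' + l0) = r * m + l0"
    using i_div i_mod l0 by (simp_all add: quad_at_def quad_index_def)
  have lin_vanishes: "\<not> lin_at i pos \<or> a * (y (lin_index i pos) - x (lin_index i pos))
      + c * (z (lin_index i pos) - x (lin_index i pos)) = 0" for pos
    using lin_zero lin_index_less by blast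
  have "comb x y z a c i pos = 0" if pos: "pos < qstart + j' + l0" for pos
  proof (cases "quad_at i pos")
    case True
    then have "quad_index i pos = r * m + (pos - qstart - j')" "pos - qstart - j' < l0"
      using i_div i_mod pos by (auto simp: quad_index_def quad_at_def)
    then show ?thesis using piv lin_vanishes[of pos] by (auto simp: comb_apply pivot_at_def)
  qed (use lin_vanishes[of pos] in \<open>auto simp: comb_apply\<close>)
  moreover have "\<not> lin_at i (qstart + j' + l0)" using lin_at_bounds by fastforce
  ultimately show ?thesis
    using piv quad unfolding i_def[symmetric] by (simp add: comb_apply pivot_at_def)
qed

abbreviation span3 :: "(nat \<Rightarrow> 'a::field) \<Rightarrow> (nat \<Rightarrow> 'a) \<Rightarrow> (nat \<Rightarrow> 'a) \<Rightarrow> (nat \<Rightarrow> 'a) set" where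
  "span3 x y z \<equiv> vspan (codeword x \<union> codeword y \<union> codeword z)"

lemma gen_in_span3:
  assumes "i < k"
  shows "gen x i \<in> span3 x y z" "gen y i \<in> span3 x y z" "gen z i \<in> span3 x y z"
proof -
  have "gen w i \<in> codeword w" for w :: "nat \<Rightarrow> 'a"
    using assms unfolding codeword_def vspan_def by (intro V.span_base) simp
  moreover have "codeword x \<union> codeword y \<union> codeword z \<subseteq> span3 x y z"
    unfolding vspan_def by (rule V.span_superset)
  ultimately show "gen x i \<in> span3 x y z" "gen y i \<in> span3 x y z" "gen z i \<in> span3 x y z"
    by blast+
qed

lemma comb_in_span3: "i < k \<Longrightarrow> comb x y z a c i \<in> span3 x y z"
  unfolding comb_def vspan_def
  by (intro V.span_add V.span_scale V.span_diff; rule gen_in_span3[unfolded vspan_def])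

lemma card_le_vdim_span3:
  assumes "Pos \<subseteq> pivot_positions (span3 x y z)"
  shows "card Pos \<le> vdim (span3 x y z)"
proof -
  define G where "G = gen x ` {..<k} \<union> gen y ` {..<k} \<union> gen z ` {..<k}"
  have "span3 x y z = V.span G"
    unfolding vspan_def codeword_def G_def V.span_eq
  proof
    show "V.span (gen x ` {..<k}) \<union> V.span (gen y ` {..<k}) \<union> V.span (gen z ` {..<k})
        \<subseteq> V.span (gen x ` {..<k} \<union> gen y ` {..<k} \<union> gen z ` {..<k})"
      by (intro Un_least V.span_mono) auto
    show "gen x ` {..<k} \<union> gen y ` {..<k} \<union> gen z ` {..<k}
        \<subseteq> V.span (V.span (gen x ` {..<k}) \<union> V.span (gen y ` {..<k}) \<union> V.span (gen z ` {..<k}))"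
      using V.span_superset by (intro Un_mono subset_trans[OF _ V.span_superset]) auto
  qed
  then show ?thesis
    using card_le_dim_if_pivot_positions[of G Pos] assms
    by (simp add: G_def vdim_def)
qed

lemma identity_block_pivots: "{..<k} \<subseteq> pivot_positions (span3 x y z)"
proof
  fix P assume "P \<in> {..<k}"
  then have "gen x P \<in> span3 x y z" "pivot_at (gen x P) P"
    using gen_in_span3(1) by (auto simp: pivot_at_def gen_low)
  then show "P \<in> pivot_positions (span3 x y z)" by (auto simp: pivot_positions_def)
qed

lemma staircase_block_pivots:
  assumes "j0 < p" and "pivot_at (\<lambda>j. a * (y j - x j) + c * (z j - x j)) j0"
  shows "{k + g * j0..<k + g * j0 + k} \<subseteq> pivot_positions (span3 x y z)"
proof
  fix P assume "P \<in> {k + g * j0..<k + g * j0 + k}"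
  then have i: "P - (k + g * j0) < k" "P = k + (P - (k + g * j0)) + g * j0" by auto
  then have "pivot_at (comb x y z a c (P - (k + g * j0))) P"
    using pivot_at_comb_lin[OF _ assms] by metis
  with comb_in_span3[OF i(1)] show "P \<in> pivot_positions (span3 x y z)"
    unfolding pivot_positions_def by blast
qed

lemma square_block_pivots:
  assumes lin_zero: "\<forall>j<p. a * (y j - x j) + c * (z j - x j) = 0"
    and j0: "j0 < p" and piv: "pivot_at (\<lambda>j. a * (y j ^ 2 - x j ^ 2) + c * (z j ^ 2 - x j ^ 2)) j0"
  shows "{qstart + j0 mod m..<qstart + j0 mod m + g} \<subseteq> pivot_positions (span3 x y z)"
proof
  fix P assume P: "P \<in> {qstart + j0 mod m..<qstart + j0 mod m + g}"
  define r where "r = j0 div m"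
  define j' where "j' = P - qstart - j0 mod m"
  have "0 < t * m" using j0 unfolding p_def by linarith
  then have "0 < m" by simp
  then have l0: "j0 mod m < m" by simp
  have r: "r < t" using j0 by (simp add: r_def p_def less_mult_imp_div_less)
  have j': "j' < g" "P = qstart + j' + j0 mod m" using P by (auto simp: j'_def)
  have "pivot_at (\<lambda>l. a * (y (r * m + l) ^ 2 - x (r * m + l) ^ 2)
                     + c * (z (r * m + l) ^ 2 - x (r * m + l) ^ 2)) (j0 mod m)"
    using pivot_at_shift[of _ "r * m" "j0 mod m"] piv by (simp add: r_def)
  then have "pivot_at (comb x y z a c (r * g + j')) P"
    using pivot_at_comb_quad[OF r j'(1) l0 lin_zero] j'(2) by simp
  moreover have "r * g + j' < k"
  proof -
    have "r * g + j' < (r + 1) * g" using j' by simp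
    also have "\<dots> \<le> t * g" using r by (intro mult_le_mono1) simp
    finally show ?thesis using tg_le_k by simp
  qed
  ultimately show "P \<in> pivot_positions (span3 x y z)"
    using comb_in_span3 unfolding pivot_positions_def by blast
qed

lemma card_le_vdim_span3_three_blocks:
  assumes "{..<k} \<union> {a..<a + k} \<union> {c..<c + g} \<subseteq> pivot_positions (span3 x y z)"
    and "k \<le> a" and "a + k \<le> c"
  shows "k + (k + g) \<le> vdim (span3 x y z)"
  using card_le_vdim_span3[OF assms(1)] card_three_intervals[OF assms(2,3)] by simp

lemma vdim_span3_ge:
  assumes xy: "\<exists>j<p. x j \<noteq> y j" and xz: "\<exists>j<p. x j \<noteq> z j" and yz: "\<exists>j<p. y j \<noteq> z j"
  shows "k + (k + g) \<le> vdim (span3 x y z)"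
proof -
  define d where "d j = y j - x j" for j
  define e where "e j = z j - x j" for j
  have "\<exists>j<p. d j \<noteq> 0" using xy by (auto simp: d_def)
  then obtain j0 where j0: "j0 < p" "pivot_at d j0" by (rule ex_pivot_at)
  have "0 < t * m" using j0(1) unfolding p_def by linarith
  then have "0 < t" by simp
  show ?thesis
  proof (cases "\<exists>c. \<forall>j<p. e j = c * d j")
    case True
    then obtain c where c: "\<forall>j<p. e j = c * d j" by blast
    have "c \<noteq> 0" using c xz by (auto simp: e_def)
    moreover have "c \<noteq> 1" using c yz by (auto simp: e_def d_def)
    ultimately have "c - c ^ 2 \<noteq> 0" by (simp add: power2_eq_square right_diff_distrib'[symmetric])
    have lin_zero: "\<forall>j<p. c * (y j - x j) + - 1 * (z j - x j) = 0"
      using c by (simp add: d_def e_def)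
    have "c * (y j ^ 2 - x j ^ 2) + - 1 * (z j ^ 2 - x j ^ 2) = (c - c ^ 2) * d j ^ 2" if "j < p" for j
    proof -
      have "z j = c * d j + x j" "y j = d j + x j"
        using c that by (simp_all add: d_def e_def diff_eq_eq[symmetric])
      then show ?thesis by (simp add: power2_eq_square algebra_simps)
    qed
    then have "pivot_at (\<lambda>j. c * (y j ^ 2 - x j ^ 2) + - 1 * (z j ^ 2 - x j ^ 2)) j0"
      using j0 \<open>c - c ^ 2 \<noteq> 0\<close> by (auto simp: pivot_at_def)
    then have "{qstart + j0 mod m..<qstart + j0 mod m + g} \<subseteq> pivot_positions (span3 x y z)"
      by (rule square_block_pivots[OF lin_zero j0(1)])
    moreover have "{k + g * j0..<k + g * j0 + k} \<subseteq> pivot_positions (span3 x y z)"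
      using j0 by (intro staircase_block_pivots[where a = 1 and c = 0]) (simp_all add: d_def[abs_def])
    moreover have "k + g * j0 + k \<le> qstart + j0 mod m"
      using staircase_fits[OF j0(1)] by (simp add: qstart_def)
    ultimately show ?thesis
      using identity_block_pivots[of x y z] by (intro card_le_vdim_span3_three_blocks) auto
  next
    case False
    obtain a1 b1 a2 b2 j1 j2 where j12: "j1 < j2" "j2 < p"
      "pivot_at (\<lambda>j. a1 * d j + b1 * e j) j1" "pivot_at (\<lambda>j. a2 * d j + b2 * e j) j2"
      by (rule two_combinations_with_distinct_pivots[OF \<open>\<exists>j<p. d j \<noteq> 0\<close> False])
    have block1: "{k + g * j1..<k + g * j1 + k} \<subseteq> pivot_positions (span3 x y z)"
      using j12 by (intro staircase_block_pivots) (simp_all add: d_def e_def)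
    have block2: "{k + g * j2..<k + g * j2 + k} \<subseteq> pivot_positions (span3 x y z)"
      using j12 by (intro staircase_block_pivots) (simp_all add: d_def e_def)
    have "g \<le> k" using g_le_k[OF \<open>0 < t\<close>] .
    have "g * Suc j1 \<le> g * j2" using j12(1) by (intro mult_le_mono2) simp
    show ?thesis
    proof (rule card_le_vdim_span3_three_blocks)
      show "{..<k} \<union> {k + g * j1..<k + g * j1 + k} \<union> {k + g * j2 + (k - g)..<k + g * j2 + (k - g) + g}
          \<subseteq> pivot_positions (span3 x y z)"
      proof (intro Un_least)
        have "{k + g * j2 + (k - g)..<k + g * j2 + (k - g) + g} \<subseteq> {k + g * j2..<k + g * j2 + k}"
          using \<open>g \<le> k\<close> by auto
        then show "{k + g * j2 + (k - g)..<k + g * j2 + (k - g) + g} \<subseteq> pivot_positions (span3 x y z)"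
          using block2 by (rule order_trans)
      qed (use identity_block_pivots[of x y z] block1 in auto)
      show "k + g * j1 + k \<le> k + g * j2 + (k - g)"
        using \<open>g * Suc j1 \<le> g * j2\<close> \<open>g \<le> k\<close> by simp
    qed simp
  qed
qed

definition code :: "(nat \<Rightarrow> 'a::field) set set" where
  "code = (\<lambda>xs. codeword ((!) xs)) ` {xs. length xs = p}"

lemma covering_code_code: "covering_code 3 n k (k + g) (code :: (nat \<Rightarrow> 'a::field) set set)"
  unfolding covering_code_def
proof (intro conjI allI impI)
  show "code \<subseteq> grassmannian n k"
    using codeword_in_grassmannian by (auto simp: code_def)
  fix A :: "(nat \<Rightarrow> 'a) set set" assume A: "A \<subseteq> code" "card A = 3"
  then obtain a1 a2 a3 where a: "A = {a1, a2, a3}" "a1 \<noteq> a2" "a2 \<noteq> a3" "a1 \<noteq> a3"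
    unfolding card_3_iff by blast
  then obtain x1 x2 x3 :: "'a list" where x:
    "a1 = codeword ((!) x1)" "a2 = codeword ((!) x2)" "a3 = codeword ((!) x3)"
    using A(1) by (auto simp: code_def)
  have differ: "\<exists>j<p. xs ! j \<noteq> ys ! j" if "codeword ((!) xs) \<noteq> codeword ((!) ys)" for xs ys :: "'a list"
    using codeword_cong that by blast
  have "k + (k + g) \<le> vdim (span3 ((!) x1) ((!) x2) ((!) x3))"
    by (intro vdim_span3_ge; rule differ) (use a x in auto)
  then show "k + (k + g) \<le> vdim (vspan (\<Union>A))" by (simp add: a x Un_assoc)
qed

lemma card_code: "card (code :: (nat \<Rightarrow> 'a::{finite,field}) set set) = card (UNIV :: 'a set) ^ p"
proof -
  have "inj_on (\<lambda>xs. codeword ((!) xs)) {xs :: 'a list. length xs = p}"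
  proof (rule inj_onI)
    fix xs ys :: "'a list"
    assume "xs \<in> {xs. length xs = p}" "ys \<in> {xs. length xs = p}"
      and "codeword ((!) xs) = codeword ((!) ys)"
    then show "xs = ys" using codeword_inj[of "(!) xs" "(!) ys"] by (auto intro: nth_equalityI)
  qed
  then show ?thesis
    using card_lists_length_eq[of "UNIV :: 'a set" p] by (simp add: code_def card_image)
qed

end

lemma finite_ambient: "finite (ambient n :: (nat \<Rightarrow> 'a::{finite,field}) set)"
proof -
  have "ambient n = {f :: nat \<Rightarrow> 'a. \<forall>i. (i \<in> {..<n} \<longrightarrow> f i \<in> UNIV) \<and> (i \<notin> {..<n} \<longrightarrow> f i = 0)}"
    by (auto simp: ambient_def not_less)
  then show ?thesis by (simp only:) (rule finite_set_of_finite_funs; simp)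
qed

lemma bdd_above_covering_code_sizes:
  "bdd_above {card C | C. covering_code \<alpha> n k \<delta> (C :: (nat \<Rightarrow> 'a::{finite,field}) set set)}"
proof (rule bdd_aboveI)
  fix s assume "s \<in> {card C | C. covering_code \<alpha> n k \<delta> (C :: (nat \<Rightarrow> 'a) set set)}"
  then obtain C :: "(nat \<Rightarrow> 'a) set set" where "s = card C" "covering_code \<alpha> n k \<delta> C" by blast
  moreover have "finite (Pow (ambient n :: (nat \<Rightarrow> 'a) set))" using finite_ambient by simp
  ultimately show "s \<le> card (Pow (ambient n :: (nat \<Rightarrow> 'a) set))"
    by (auto simp: covering_code_def grassmannian_def intro!: card_mono)
qed

theorem mainTheorem13:
  fixes n k \<gamma> :: nat
  assumes "n > 0" "k > 0" "\<gamma> > 0" "n \<ge> 2 * k + \<gamma>"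
  shows "B TYPE('a::{finite,field}) n k (k + \<gamma>) 3
           \<ge> card (UNIV :: 'a set) ^ (((n - 2 * k + 1) div (k + 1)) * (k div \<gamma>))"
proof -
  define m where "m = (n - 2 * k + 1) div (k + 1)"
  define t where "t = k div \<gamma>"
  have "m * (k + 1) \<le> n - 2 * k + 1" unfolding m_def by (rule div_times_less_eq_dividend)
  moreover have "t * \<gamma> \<le> k" unfolding t_def by (rule div_times_less_eq_dividend)
  ultimately interpret staircase_code n k \<gamma> m t
    using assms by unfold_locales auto
  have "covering_code 3 n k (k + \<gamma>) (code :: (nat \<Rightarrow> 'a) set set)"
    by (rule covering_code_code)
  moreover have "card (code :: (nat \<Rightarrow> 'a) set set) = card (UNIV :: 'a set) ^ (m * t)"
    using card_code by (simp add: p_def mult.commute)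
  ultimately have "card (UNIV :: 'a set) ^ (m * t)
      \<in> {card C | C. covering_code 3 n k (k + \<gamma>) (C :: (nat \<Rightarrow> 'a) set set)}"
    by (metis (mono_tags, lifting) mem_Collect_eq)
  then show ?thesis
    unfolding B_def m_def[symmetric] t_def[symmetric]
    by (rule cSup_upper[OF _ bdd_above_covering_code_sizes])
qed

end
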